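(* Let $(U_1,U_2)$ have joint CDF equal to the power-divergence copula $C_\lambda$, and define the tail-dependence coefficients $T_L(\lambda)=\lim_{u\downarrow0}\Pr(U_1\le u\mid U_2\le u)$ and $T_U(\lambda)=\lim_{u\uparrow1}\Pr(U_1\ge u\mid U_2\ge u)$. Then (i) $T_L(\lambda)=2^{1/(\lambda+1)}$ if $\lambda<-1$ and $T_L(\lambda)=0$ if $\lambda\ge-1$; (ii) $T_U(\lambda)=2-\sqrt{2}$ for every $\lambda\in(-\infty,\infty)$.
   Context: For $\lambda\in\mathbb{R}$ define $\phi_\lambda$ on $[0,\infty)$ by $\phi_\lambda(x)=\frac{1}{\lambda(\lambda+1)}(x^{\lambda+1}-x+\lambda(1-x))$ for $\lambda\neq-1,0$; $\phi_0(x)=1-x+x\log x$; $\phi_{-1}(x)=x-1-\log x$; values at $x=0$ are limits, so $\phi_\lambda(0)=1/(\lambda+1)$ for $\lambda>-1$ and $\phi_\lambda(0)=\infty$ for $\lambda\le-1$. On $[0,1]$, $\phi_\lambda$ is convex, strictly decreasing, $\phi_\lambda(1)=0$. The pseudoinverse is $\phi_\lambda^{[-1]}(t)=\phi_\lambda^{-1}(t)$ (inverse of $\phi_\lambda|_{[0,1]}$) for $0\le t<\phi_\lambda(0)$ and $0$ for $t\ge\phi_\lambda(0)$. The power-divergence (PD) copula is $C_\lambda(u_1,u_2)=\phi_\lambda^{[-1]}(\phi_\lambda(u_1)+\phi_\lambda(u_2))$, $u_1,u_2\in[0,1]$ (with $\phi_\lambda^{[-1]}(\infty)=0$). *)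

theory Defs
  imports "HOL-Probability.Probability"
begin

text \<open>The power-divergence generator, real formula for x > 0 (and for x = 0 whenever
  the limit is finite, i.e. lam > -1, where the formula with 0 powr a = 0, 0 * ln 0 = 0
  gives the limit value 1/(lam+1)).\<close>
definition pd_phi_real :: "real \<Rightarrow> real \<Rightarrow> real" where
  "pd_phi_real lam x =
     (if lam = 0 then 1 - x + x * ln x
      else if lam = -1 then x - 1 - ln x
      else (x powr (lam + 1) - x + lam * (1 - x)) / (lam * (lam + 1)))"

definition pd_phi :: "real \<Rightarrow> real \<Rightarrow> ereal" where
  "pd_phi lam x = (if x = 0 \<and> lam \<le> -1 then \<infinity> else ereal (pd_phi_real lam x))"

definition pd_phi_pinv :: "real \<Rightarrow> ereal \<Rightarrow> real" where
  "pd_phi_pinv lam t =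
     (if t < pd_phi lam 0 then (THE x. x \<in> {0..1} \<and> pd_phi lam x = t) else 0)"

definition pd_copula :: "real \<Rightarrow> real \<Rightarrow> real \<Rightarrow> real" where
  "pd_copula lam u1 u2 = pd_phi_pinv lam (pd_phi lam u1 + pd_phi lam u2)"

end

theory Submission
  imports Defs "HOL-Real_Asymp.Real_Asymp"
begin

text \<open>
  Both tail coefficients are read off the diagonal section \<open>v(u) = C(u,u)\<close>, which is
  characterised by \<open>\<phi>(v) = 2 \<phi>(u)\<close>; the margins of \<open>C\<close> are uniform, hence atomless, so the two
  conditional probabilities equal \<open>v(u)/u\<close> and \<open>(1 - 2u + v(u))/(1 - u)\<close>.
  Near 1 every generator is quadratic, \<open>\<phi>(x) \<sim> (1 - x)\<^sup>2/2\<close>, so \<open>(1 - v)/(1 - u) \<rightarrow> \<surd>2\<close>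
  and the upper coefficient is \<open>2 - \<surd>2\<close> whatever \<open>\<lambda>\<close> is.
  Near 0 the generators differ: for \<open>\<lambda> > -1\<close> the value \<open>\<phi>(0)\<close> is finite and \<open>2 \<phi>(u)\<close> exceeds it,
  so \<open>v = 0\<close> for small \<open>u\<close>; for \<open>\<lambda> = -1\<close> the logarithm forces \<open>v \<le> e\<^sup>2 u\<^sup>2\<close>; for \<open>\<lambda> < -1\<close>,
  \<open>\<phi>(x) \<sim> x\<^bsup>\<lambda>+1\<^esup>/(\<lambda>(\<lambda>+1))\<close> gives \<open>(v/u)\<^bsup>\<lambda>+1\<^esup> \<rightarrow> 2\<close>.
\<close>

definition pd_phi_deriv :: "real \<Rightarrow> real \<Rightarrow> real" where
  "pd_phi_deriv lam x = (if lam = 0 then ln x else (x powr lam - 1) / lam)"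

lemma pd_phi_real_one [simp]: "pd_phi_real lam 1 = 0"
  by (simp add: pd_phi_real_def)

lemma pd_phi_deriv_one [simp]: "pd_phi_deriv lam 1 = 0"
  by (simp add: pd_phi_deriv_def)

lemma has_real_derivative_pd_phi_real:
  assumes "0 < x"
  shows "(pd_phi_real lam has_real_derivative pd_phi_deriv lam x) (at x)"
proof -
  consider "lam = 0" | "lam = -1" | "lam \<noteq> 0" "lam \<noteq> -1" by blast
  then show ?thesis
  proof cases
    case 1
    have "((\<lambda>x. 1 - x + x * ln x) has_real_derivative ln x) (at x)"
      using assms by (auto intro!: derivative_eq_intros)
    with 1 show ?thesis by (simp add: pd_phi_real_def[abs_def] pd_phi_deriv_def)
  next
    case 2
    have "((\<lambda>x. x - 1 - ln x) has_real_derivative pd_phi_deriv lam x) (at x)"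
      using assms 2 by (auto intro!: derivative_eq_intros simp: pd_phi_deriv_def powr_minus field_simps)
    with 2 show ?thesis by (simp add: pd_phi_real_def[abs_def])
  next
    case 3
    then have "lam + 1 \<noteq> 0" by linarith
    have "((\<lambda>x. (x powr (lam + 1) - x + lam * (1 - x)) / (lam * (lam + 1)))
        has_real_derivative ((lam + 1) * x powr lam - 1 - lam) / (lam * (lam + 1))) (at x)"
      using assms 3 by (auto intro!: derivative_eq_intros simp: powr_diff)
    moreover have "(lam + 1) * x powr lam - 1 - lam = (lam + 1) * (x powr lam - 1)"
      by (simp add: algebra_simps)
    ultimately show ?thesis
      using 3 \<open>lam + 1 \<noteq> 0\<close> by (simp add: pd_phi_real_def[abs_def] pd_phi_deriv_def)
  qed
qed

lemma has_real_derivative_pd_phi_deriv: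
  assumes "0 < x"
  shows "(pd_phi_deriv lam has_real_derivative x powr (lam - 1)) (at x)"
proof (cases "lam = 0")
  case True
  have "(ln has_real_derivative 1 / x) (at x)"
    using assms by (auto intro!: derivative_eq_intros)
  with True assms show ?thesis
    by (simp add: pd_phi_deriv_def[abs_def] powr_minus divide_simps del: powr_neg_one)
next
  case False
  have "((\<lambda>x. (x powr lam - 1) / lam) has_real_derivative lam * x powr (lam - 1) / lam) (at x)"
    using assms by (auto intro!: derivative_eq_intros)
  with False show ?thesis by (simp add: pd_phi_deriv_def[abs_def])
qed

lemma isCont_pd_phi_real: "0 < x \<Longrightarrow> isCont (pd_phi_real lam) x"
  using has_real_derivative_pd_phi_real DERIV_isCont by blast

lemma isCont_pd_phi_deriv: "0 < x \<Longrightarrow> isCont (pd_phi_deriv lam) x"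
  using has_real_derivative_pd_phi_deriv DERIV_isCont by blast

lemma pd_phi_deriv_neg:
  assumes "0 < x" "x < 1"
  shows "pd_phi_deriv lam x < 0"
proof -
  have "pd_phi_deriv lam x < pd_phi_deriv lam 1"
  proof (rule DERIV_pos_imp_increasing_open[OF \<open>x < 1\<close>])
    show "\<exists>y. (pd_phi_deriv lam has_real_derivative y) (at t) \<and> 0 < y" if "x < t" for t
      using that assms has_real_derivative_pd_phi_deriv[of t lam] by auto
    show "continuous_on {x..1} (pd_phi_deriv lam)"
      using assms by (intro continuous_at_imp_continuous_on ballI isCont_pd_phi_deriv) auto
  qed
  then show ?thesis by simp
qed

lemma pd_phi_real_strict_antimono:
  assumes "0 < x" "x < y" "y \<le> 1"
  shows "pd_phi_real lam y < pd_phi_real lam x"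
proof (rule DERIV_neg_imp_decreasing_open[OF \<open>x < y\<close>])
  show "\<exists>d. (pd_phi_real lam has_real_derivative d) (at t) \<and> d < 0" if "x < t" "t < y" for t
    using that assms has_real_derivative_pd_phi_real[of t lam] pd_phi_deriv_neg[of t lam] by auto
  show "continuous_on {x..y} (pd_phi_real lam)"
    using assms by (intro continuous_at_imp_continuous_on ballI isCont_pd_phi_real) auto
qed

lemma pd_phi_real_antimono:
  "0 < x \<Longrightarrow> x \<le> y \<Longrightarrow> y \<le> 1 \<Longrightarrow> pd_phi_real lam y \<le> pd_phi_real lam x"
  using pd_phi_real_strict_antimono[of x y lam] by (cases "x = y") auto

lemma pd_phi_real_less_cancel_iff:
  assumes "x \<in> {0<..1}" "y \<in> {0<..1}"
  shows "pd_phi_real lam x < pd_phi_real lam y \<longleftrightarrow> y < x"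
  using assms pd_phi_real_strict_antimono[of x y lam] pd_phi_real_strict_antimono[of y x lam]
  by (cases x y rule: linorder_cases) auto

lemma pd_phi_real_le_cancel_iff:
  assumes "x \<in> {0<..1}" "y \<in> {0<..1}"
  shows "pd_phi_real lam x \<le> pd_phi_real lam y \<longleftrightarrow> y \<le> x"
  using pd_phi_real_less_cancel_iff[OF assms(2,1)] by (simp add: not_less[symmetric])

lemma inj_on_pd_phi_real: "inj_on (pd_phi_real lam) {0<..1}"
proof (rule inj_onI)
  fix x y assume "x \<in> {0<..1}" "y \<in> {0<..1}" "pd_phi_real lam x = pd_phi_real lam y"
  then show "x = y"
    using pd_phi_real_le_cancel_iff[of x y lam] pd_phi_real_le_cancel_iff[of y x lam] by simp
qed

lemma pd_phi_real_pos: "0 < x \<Longrightarrow> x < 1 \<Longrightarrow> 0 < pd_phi_real lam x"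
  using pd_phi_real_strict_antimono[of x 1 lam] by simp

lemma pd_phi_real_nonneg: "0 < x \<Longrightarrow> x \<le> 1 \<Longrightarrow> 0 \<le> pd_phi_real lam x"
  using pd_phi_real_pos[of x lam] by (cases "x = 1") auto

lemma pd_phi_real_tendsto_0:
  assumes "lam > -1"
  shows "(pd_phi_real lam \<longlongrightarrow> 1 / (lam + 1)) (at_right 0)"
proof (cases "lam = 0")
  case True
  have "((\<lambda>x::real. 1 - x + x * ln x) \<longlongrightarrow> 1) (at_right 0)" by real_asymp
  with True show ?thesis by (simp add: pd_phi_real_def[abs_def])
next
  case False
  have "((\<lambda>x::real. x powr (lam + 1)) \<longlongrightarrow> 0) (at_right 0)"
    using assms by real_asymp
  then have "((\<lambda>x. (x powr (lam + 1) - x + lam * (1 - x)) / (lam * (lam + 1)))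
      \<longlongrightarrow> (0 - 0 + lam * (1 - 0)) / (lam * (lam + 1))) (at_right 0)"
    using False assms by (intro tendsto_intros) (auto intro: tendsto_ident_at)
  moreover have "(0 - 0 + lam * (1 - 0)) / (lam * (lam + 1)) = 1 / (lam + 1)"
    using False by simp
  ultimately show ?thesis using False assms by (simp add: pd_phi_real_def[abs_def])
qed

lemma filterlim_pd_phi_real_at_right_0:
  assumes "lam \<le> -1"
  shows "filterlim (pd_phi_real lam) at_top (at_right 0)"
proof (cases "lam = -1")
  case True
  have "filterlim (\<lambda>x::real. x - 1 - ln x) at_top (at_right 0)" by real_asymp
  with True show ?thesis by (simp add: pd_phi_real_def[abs_def])
next
  case False
  with assms have "lam < -1" by simp
  have "0 < 1 / (lam * (lam + 1))"
    using \<open>lam < -1\<close> by (simp add: mult_neg_neg)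
  moreover have "filterlim (\<lambda>x::real. x powr (lam + 1) - x + lam * (1 - x)) at_top (at_right 0)"
    using \<open>lam < -1\<close> by real_asymp
  ultimately have "filterlim (\<lambda>x. (x powr (lam + 1) - x + lam * (1 - x)) * (1 / (lam * (lam + 1))))
      at_top (at_right 0)"
    by (rule filterlim_at_top_mult_tendsto_pos[OF tendsto_const])
  with \<open>lam < -1\<close> show ?thesis by (simp add: pd_phi_real_def[abs_def])
qed

lemma pd_phi_real_over_powr_tendsto_0:
  assumes "lam < -1"
  shows "((\<lambda>x. pd_phi_real lam x / x powr (lam + 1)) \<longlongrightarrow> 1 / (lam * (lam + 1))) (at_right 0)"
proof -
  have "((\<lambda>x::real. (x powr (lam + 1) - x + lam * (1 - x)) / (lam * (lam + 1)) / x powr (lam + 1))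
      \<longlongrightarrow> 1 / (lam * (lam + 1))) (at_right 0)"
    using assms by real_asymp (simp add: field_simps)
  with assms show ?thesis by (simp add: pd_phi_real_def[abs_def])
qed

lemma pd_phi_real_over_square_tendsto_1:
  "((\<lambda>x. pd_phi_real lam x / (1 - x)\<^sup>2) \<longlongrightarrow> 1 / 2) (at_left 1)"
proof -
  consider "lam = 0" | "lam = -1" | "lam \<noteq> 0" "lam \<noteq> -1" by blast
  then show ?thesis
  proof cases
    case 1
    have "((\<lambda>x::real. (1 - x + x * ln x) / (1 - x)\<^sup>2) \<longlongrightarrow> 1 / 2) (at_left 1)" by real_asymp
    with 1 show ?thesis by (simp add: pd_phi_real_def[abs_def])
  next
    case 2
    have "((\<lambda>x::real. (x - 1 - ln x) / (1 - x)\<^sup>2) \<longlongrightarrow> 1 / 2) (at_left 1)" by real_asymp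
    with 2 show ?thesis by (simp add: pd_phi_real_def[abs_def])
  next
    case 3
    then have "lam * (lam + 1) \<noteq> 0" by simp
    then have "((\<lambda>x::real. (x powr (lam + 1) - x + lam * (1 - x)) / (lam * (lam + 1)) / (1 - x)\<^sup>2)
        \<longlongrightarrow> 1 / 2) (at_left 1)"
      by real_asymp (simp add: field_simps)
    with 3 show ?thesis by (simp add: pd_phi_real_def[abs_def])
  qed
qed

lemma pd_phi_real_tendsto_1: "(pd_phi_real lam \<longlongrightarrow> 0) (at_left 1)"
  using isCont_pd_phi_real[of 1 lam] by (simp add: isCont_def filterlim_at_split)

lemma pd_phi_pos [simp]: "0 < x \<Longrightarrow> pd_phi lam x = ereal (pd_phi_real lam x)"
  by (simp add: pd_phi_def)

lemma pd_phi_one [simp]: "pd_phi lam 1 = 0"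
  by (simp add: zero_ereal_def)

lemma pd_phi_zero: "pd_phi lam 0 = (if lam \<le> -1 then \<infinity> else ereal (1 / (lam + 1)))"
  by (cases "lam = 0") (auto simp: pd_phi_def pd_phi_real_def)

lemma pd_phi_real_less_pd_phi_zero:
  assumes "0 < x" "x \<le> 1"
  shows "ereal (pd_phi_real lam x) < pd_phi lam 0"
proof (cases "lam \<le> -1")
  case False
  have "\<forall>\<^sub>F y in at_right 0. y \<in> {0<..<x / 2}"
    using assms by (intro eventually_at_right_real) simp
  then have "\<forall>\<^sub>F y in at_right 0. pd_phi_real lam (x / 2) \<le> pd_phi_real lam y"
    by eventually_elim (use assms in \<open>auto intro: pd_phi_real_antimono\<close>)
  then have "pd_phi_real lam (x / 2) \<le> 1 / (lam + 1)"
    using False by (intro tendsto_lowerbound[OF pd_phi_real_tendsto_0]) auto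
  moreover have "pd_phi_real lam x < pd_phi_real lam (x / 2)"
    using assms by (intro pd_phi_real_strict_antimono) auto
  ultimately show ?thesis using False by (simp add: pd_phi_zero)
qed (simp add: pd_phi_zero)

lemma eventually_less_pd_phi_real_at_right_0:
  assumes "ereal t < pd_phi lam 0"
  shows "\<forall>\<^sub>F x in at_right 0. t < pd_phi_real lam x"
proof (cases "lam \<le> -1")
  case True
  then show ?thesis
    using filterlim_pd_phi_real_at_right_0 by (simp add: filterlim_at_top_dense)
next
  case False
  then show ?thesis
    using assms order_tendstoD(1)[OF pd_phi_real_tendsto_0] by (simp add: pd_phi_zero)
qed

lemma ex_pd_phi_real_eq:
  assumes "0 \<le> t" "ereal t < pd_phi lam 0"
  shows "\<exists>x\<in>{0<..1}. pd_phi_real lam x = t"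
proof -
  have "\<forall>\<^sub>F x in at_right 0. t < pd_phi_real lam x \<and> x \<in> {0<..<1}"
    by (intro eventually_conj eventually_less_pd_phi_real_at_right_0 assms eventually_at_right_real)
      simp
  then obtain a where a: "t < pd_phi_real lam a" "a \<in> {0<..<1}"
    using eventually_happens'[OF trivial_limit_at_right_real] by blast
  have "continuous_on {a..1} (pd_phi_real lam)"
    using a by (intro continuous_at_imp_continuous_on ballI isCont_pd_phi_real) auto
  then obtain x where "a \<le> x" "x \<le> 1" "pd_phi_real lam x = t"
    using IVT2'[of "pd_phi_real lam" 1 t a] a assms(1) by auto
  with a show ?thesis by auto
qed

lemma pd_phi_pinv_pd_phi:
  assumes "x \<in> {0..1}"
  shows "pd_phi_pinv lam (pd_phi lam x) = x"
proof (cases "x = 0")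
  case False
  with assms have x: "0 < x" "x \<le> 1" by auto
  have less: "pd_phi lam x < pd_phi lam 0"
    using x pd_phi_real_less_pd_phi_zero by simp
  have "(THE y. y \<in> {0..1} \<and> pd_phi lam y = pd_phi lam x) = x"
  proof (rule the_equality)
    fix y assume y: "y \<in> {0..1} \<and> pd_phi lam y = pd_phi lam x"
    have "y \<noteq> 0"
    proof
      assume "y = 0"
      with y less show False by simp
    qed
    with y have "0 < y" "y \<le> 1" by auto
    with y have "ereal (pd_phi_real lam y) = ereal (pd_phi_real lam x)"
      by (simp only: pd_phi_pos[OF \<open>0 < y\<close>] pd_phi_pos[OF \<open>0 < x\<close>])
    then have "pd_phi_real lam y = pd_phi_real lam x" by simp
    moreover have "y \<in> {0<..1}" "x \<in> {0<..1}"
      using \<open>0 < y\<close> \<open>y \<le> 1\<close> x by simp_all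
    ultimately show "y = x"
      by (rule inj_onD[OF inj_on_pd_phi_real])
  qed (use assms in simp)
  with less show ?thesis by (simp add: pd_phi_pinv_def)
qed (simp add: pd_phi_pinv_def)

lemma pd_copula_one:
  assumes "x \<in> {0..1}"
  shows "pd_copula lam x 1 = x" "pd_copula lam 1 x = x"
  using pd_phi_pinv_pd_phi[OF assms] by (simp_all add: pd_copula_def)

lemma pd_copula_diagonal:
  assumes "u \<in> {0<..1}" "ereal (2 * pd_phi_real lam u) < pd_phi lam 0"
  shows "pd_copula lam u u \<in> {0<..u}"
    and "pd_phi_real lam (pd_copula lam u u) = 2 * pd_phi_real lam u"
proof -
  have "0 \<le> 2 * pd_phi_real lam u"
    using assms(1) pd_phi_real_nonneg[of u lam] by simp
  then obtain v where v: "v \<in> {0<..1}" "pd_phi_real lam v = 2 * pd_phi_real lam u"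
    using ex_pd_phi_real_eq[OF _ assms(2)] by blast
  have "pd_copula lam u u = pd_phi_pinv lam (pd_phi lam v)"
    using assms(1) v by (simp add: pd_copula_def)
  also have "\<dots> = v"
    using v by (intro pd_phi_pinv_pd_phi) auto
  finally have "pd_copula lam u u = v" .
  moreover have "v \<le> u"
    using v assms(1) pd_phi_real_nonneg[of u lam] pd_phi_real_le_cancel_iff[of u v lam] by simp
  ultimately show "pd_copula lam u u \<in> {0<..u}"
    and "pd_phi_real lam (pd_copula lam u u) = 2 * pd_phi_real lam u"
    using v by auto
qed

lemma tendsto_ratio_comp_of_asymp:
  fixes f g :: "'a \<Rightarrow> real" and v :: "'a \<Rightarrow> 'a"
  assumes lim: "((\<lambda>x. f x / g x) \<longlongrightarrow> c) F" and "c \<noteq> 0"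
    and v: "filterlim v F F"
    and scaled: "\<forall>\<^sub>F x in F. f (v x) = a * f x"
    and nonzero: "\<forall>\<^sub>F x in F. f x \<noteq> 0 \<and> g x \<noteq> 0"
  shows "((\<lambda>x. g (v x) / g x) \<longlongrightarrow> a) F"
proof -
  have "((\<lambda>x. a * (f x / g x) / (f (v x) / g (v x))) \<longlongrightarrow> a * c / c) F"
    using \<open>c \<noteq> 0\<close> by (intro tendsto_intros lim filterlim_compose[OF lim v])
  moreover have "\<forall>\<^sub>F x in F. a * (f x / g x) / (f (v x) / g (v x)) = g (v x) / g x"
    using nonzero eventually_compose_filterlim[OF nonzero v] scaled
    by eventually_elim (auto simp: field_simps)
  ultimately show ?thesis
    using \<open>c \<noteq> 0\<close> by (simp add: tendsto_cong)
qed

lemma pd_copula_diagonal_eventually_zero: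
  assumes "lam > -1"
  shows "\<forall>\<^sub>F u in at_right 0. pd_copula lam u u = 0"
proof -
  define c where "c = 1 / (lam + 1)"
  have "0 < c"
    using assms by (simp add: c_def)
  then have "c / 2 < c" by simp
  moreover have "(pd_phi_real lam \<longlongrightarrow> c) (at_right 0)"
    using pd_phi_real_tendsto_0[OF assms] by (simp add: c_def)
  ultimately have "\<forall>\<^sub>F u in at_right 0. 0 < u \<and> c / 2 < pd_phi_real lam u"
    by (intro eventually_conj eventually_at_right_less order_tendstoD(1))
  then show ?thesis
  proof eventually_elim
    case (elim u)
    then have "\<not> ereal (2 * pd_phi_real lam u) < pd_phi lam 0"
      using assms by (simp add: pd_phi_zero flip: c_def)
    with elim show ?case by (simp add: pd_copula_def pd_phi_pinv_def)
  qed
qed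

lemma pd_copula_diagonal_minus_one_bounds:
  assumes "0 < u" "u < 1"
  shows "pd_copula (-1) u u \<in> {0<..exp 2 * u\<^sup>2}"
proof -
  define v where "v = pd_copula (-1) u u"
  have "ereal (2 * pd_phi_real (-1) u) < pd_phi (-1) 0"
    by (simp add: pd_phi_zero)
  with assms have v: "0 < v" "v \<le> u" "pd_phi_real (-1) v = 2 * pd_phi_real (-1) u"
    using pd_copula_diagonal[of u "-1"] by (auto simp: v_def)
  then have "ln v = v + 1 - 2 * u + 2 * ln u"
    by (simp add: pd_phi_real_def algebra_simps)
  also have "\<dots> \<le> ln (exp 2 * u\<^sup>2)"
    using assms v by (simp add: ln_mult ln_realpow)
  finally show ?thesis
    using v assms by (simp flip: v_def)
qed

lemma pd_copula_lower_tail_minus_one: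
  "((\<lambda>u. pd_copula (-1) u u / u) \<longlongrightarrow> 0) (at_right 0)"
proof (rule tendsto_sandwich)
  have "\<forall>\<^sub>F u in at_right 0. u \<in> {0<..<1::real}"
    by (rule eventually_at_right_real) simp
  then show "\<forall>\<^sub>F u in at_right 0. 0 \<le> pd_copula (-1) u u / u"
    and "\<forall>\<^sub>F u in at_right 0. pd_copula (-1) u u / u \<le> exp 2 * u"
    by (eventually_elim;
        use pd_copula_diagonal_minus_one_bounds in \<open>force simp: field_simps power2_eq_square\<close>)+
  show "((\<lambda>u::real. exp 2 * u) \<longlongrightarrow> 0) (at_right 0)"
    by real_asymp
qed simp

lemma pd_copula_lower_tail_less_minus_one:
  assumes "lam < -1"
  shows "((\<lambda>u. pd_copula lam u u / u) \<longlongrightarrow> 2 powr (1 / (lam + 1))) (at_right 0)"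
proof -
  define A where "A = lam + 1"
  let ?v = "\<lambda>u. pd_copula lam u u"
  have "\<forall>\<^sub>F u in at_right 0. u \<in> {0<..<1::real}"
    by (rule eventually_at_right_real) simp
  then have diag: "\<forall>\<^sub>F u in at_right 0. u \<in> {0<..<1} \<and> ?v u \<in> {0<..u} \<and>
      pd_phi_real lam (?v u) = 2 * pd_phi_real lam u"
    by eventually_elim (use assms pd_copula_diagonal in \<open>auto simp: pd_phi_zero\<close>)
  have "(?v \<longlongrightarrow> 0) (at_right 0)"
  proof (rule tendsto_sandwich[OF _ _ tendsto_const tendsto_ident_at])
    show "\<forall>\<^sub>F u in at_right 0. 0 \<le> ?v u" "\<forall>\<^sub>F u in at_right 0. ?v u \<le> u"
      using diag by (auto elim: eventually_mono)
  qed
  with diag have v_lim: "filterlim ?v (at_right 0) (at_right 0)"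
    by (auto simp: filterlim_at elim: eventually_mono)
  have "((\<lambda>u. ?v u powr A / u powr A) \<longlongrightarrow> 2) (at_right 0)"
  proof (rule tendsto_ratio_comp_of_asymp[OF pd_phi_real_over_powr_tendsto_0[OF assms, folded A_def]
        _ v_lim])
    show "1 / (lam * A) \<noteq> 0"
      using assms by (simp add: A_def)
    show "\<forall>\<^sub>F u in at_right 0. pd_phi_real lam (?v u) = 2 * pd_phi_real lam u"
      "\<forall>\<^sub>F u in at_right 0. pd_phi_real lam u \<noteq> 0 \<and> u powr A \<noteq> 0"
      using diag by (auto elim!: eventually_mono dest: pd_phi_real_pos[of _ lam])
  qed
  then have "((\<lambda>u. (?v u powr A / u powr A) powr (1 / A)) \<longlongrightarrow> 2 powr (1 / A)) (at_right 0)"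
    by (rule tendsto_powr) simp_all
  moreover have "\<forall>\<^sub>F u in at_right 0. (?v u powr A / u powr A) powr (1 / A) = ?v u / u"
    using diag by eventually_elim (use assms in \<open>simp add: A_def powr_divide powr_powr\<close>)
  ultimately show ?thesis
    by (simp add: A_def tendsto_cong)
qed

lemma pd_copula_lower_tail:
  "((\<lambda>u. pd_copula lam u u / u) \<longlongrightarrow> (if lam < -1 then 2 powr (1 / (lam + 1)) else 0)) (at_right 0)"
proof -
  consider "lam > -1" | "lam = -1" | "lam < -1" by linarith
  then show ?thesis
  proof cases
    case 1
    have "\<forall>\<^sub>F u in at_right 0. pd_copula lam u u / u = 0"
      using pd_copula_diagonal_eventually_zero[OF 1] by (rule eventually_mono) simp
    with 1 show ?thesis
      by (simp add: tendsto_eventually)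
  qed (simp_all add: pd_copula_lower_tail_minus_one pd_copula_lower_tail_less_minus_one)
qed

lemma eventually_pd_copula_diagonal_at_left_1:
  "\<forall>\<^sub>F u in at_left 1. u \<in> {0<..<1} \<and> pd_copula lam u u \<in> {0<..u} \<and>
     pd_phi_real lam (pd_copula lam u u) = 2 * pd_phi_real lam u"
proof -
  have "\<forall>\<^sub>F u in at_left 1. ereal (2 * pd_phi_real lam u) < pd_phi lam 0"
  proof (cases "lam \<le> -1")
    case False
    have "0 < 1 / (lam + 1)"
      using False by simp
    with tendsto_mult_right_zero[OF pd_phi_real_tendsto_1[of lam], of 2]
    have "\<forall>\<^sub>F u in at_left 1. 2 * pd_phi_real lam u < 1 / (lam + 1)"
      by (rule order_tendstoD(2))
    with False show ?thesis
      by (simp add: pd_phi_zero)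
  qed (simp add: pd_phi_zero)
  moreover have "\<forall>\<^sub>F u in at_left 1. u \<in> {0<..<1::real}"
    by (rule eventually_at_left_real) simp
  ultimately show ?thesis
    by eventually_elim (use pd_copula_diagonal in auto)
qed

lemma filterlim_pd_copula_diagonal_at_left_1:
  "filterlim (\<lambda>u. pd_copula lam u u) (at_left 1) (at_left 1)"
proof -
  let ?v = "\<lambda>u. pd_copula lam u u"
  note diag = eventually_pd_copula_diagonal_at_left_1[of lam]
  have "(?v \<longlongrightarrow> 1) (at_left 1)"
  proof (rule order_tendstoI)
    fix a :: real assume "a < 1"
    show "\<forall>\<^sub>F u in at_left 1. a < ?v u"
    proof (cases "0 < a")
      case True
      with \<open>a < 1\<close> have "0 < pd_phi_real lam a"
        by (intro pd_phi_real_pos)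
      with tendsto_mult_right_zero[OF pd_phi_real_tendsto_1[of lam], of 2]
      have "\<forall>\<^sub>F u in at_left 1. 2 * pd_phi_real lam u < pd_phi_real lam a"
        by (rule order_tendstoD(2))
      with diag show ?thesis
      proof eventually_elim
        case (elim u)
        with True \<open>a < 1\<close> show ?case
          using pd_phi_real_less_cancel_iff[of "?v u" a lam] by auto
      qed
    qed (use diag in \<open>auto elim: eventually_mono\<close>)
  next
    fix a :: real assume "1 < a"
    with diag show "\<forall>\<^sub>F u in at_left 1. ?v u < a"
      by (auto elim: eventually_mono)
  qed
  with diag show ?thesis
    by (auto simp: filterlim_at elim: eventually_mono)
qed

lemma pd_copula_upper_tail:
  "((\<lambda>u. (1 - 2 * u + pd_copula lam u u) / (1 - u)) \<longlongrightarrow> 2 - sqrt 2) (at_left 1)"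
proof -
  let ?v = "\<lambda>u. pd_copula lam u u"
  note diag = eventually_pd_copula_diagonal_at_left_1[of lam]
  have "((\<lambda>u. (1 - ?v u)\<^sup>2 / (1 - u)\<^sup>2) \<longlongrightarrow> 2) (at_left 1)"
  proof (rule tendsto_ratio_comp_of_asymp[OF pd_phi_real_over_square_tendsto_1 _
        filterlim_pd_copula_diagonal_at_left_1])
    show "\<forall>\<^sub>F u in at_left 1. pd_phi_real lam (?v u) = 2 * pd_phi_real lam u"
      "\<forall>\<^sub>F u in at_left 1. pd_phi_real lam u \<noteq> 0 \<and> (1 - u)\<^sup>2 \<noteq> 0"
      using diag by (auto elim!: eventually_mono dest: pd_phi_real_pos[of _ lam])
  qed simp
  then have "((\<lambda>u. 2 - sqrt ((1 - ?v u)\<^sup>2 / (1 - u)\<^sup>2)) \<longlongrightarrow> 2 - sqrt 2) (at_left 1)"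
    by (intro tendsto_intros)
  moreover have "\<forall>\<^sub>F u in at_left 1.
      2 - sqrt ((1 - ?v u)\<^sup>2 / (1 - u)\<^sup>2) = (1 - 2 * u + ?v u) / (1 - u)"
    using diag by eventually_elim (auto simp: real_sqrt_divide field_simps)
  ultimately show ?thesis
    by (simp add: tendsto_cong)
qed

lemma (in prob_space) prob_joint_le_eq_marginal:
  fixes U V :: "'a \<Rightarrow> real"
  assumes [measurable]: "U \<in> borel_measurable M" "V \<in> borel_measurable M"
    and full: "prob {\<omega> \<in> space M. U \<omega> \<le> a \<and> V \<omega> \<le> b} = 1"
  shows "prob {\<omega> \<in> space M. U \<omega> \<le> a \<and> V \<omega> \<le> y} = prob {\<omega> \<in> space M. V \<omega> \<le> y}"
proof (rule prob_eq_AE)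
  show "AE \<omega> in M. U \<omega> \<le> a \<and> V \<omega> \<le> y \<longleftrightarrow> V \<omega> \<le> y"
    using AE_prob_1[OF full] by eventually_elim auto
  show "{\<omega> \<in> space M. U \<omega> \<le> a \<and> V \<omega> \<le> y} \<in> events"
    by measurable
  show "{\<omega> \<in> space M. V \<omega> \<le> y} \<in> events"
    by measurable
qed

lemma (in prob_space) prob_eq_0_of_uniform:
  fixes U :: "'a \<Rightarrow> real"
  assumes [measurable]: "U \<in> borel_measurable M"
    and uniform: "\<And>y. y \<in> {0..1} \<Longrightarrow> prob {\<omega> \<in> space M. U \<omega> \<le> y} = y"
    and u: "u \<in> {0<..1}"
  shows "prob {\<omega> \<in> space M. U \<omega> = u} = 0"
proof (rule antisym[OF field_le_epsilon measure_nonneg])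
  fix e :: real assume "0 < e"
  show "prob {\<omega> \<in> space M. U \<omega> = u} \<le> 0 + e"
  proof (cases "e < u")
    case True
    have "prob {\<omega> \<in> space M. U \<omega> = u}
        \<le> prob ({\<omega> \<in> space M. U \<omega> \<le> u} - {\<omega> \<in> space M. U \<omega> \<le> u - e})"
      using \<open>0 < e\<close> by (intro finite_measure_mono) auto
    also have "\<dots> = prob {\<omega> \<in> space M. U \<omega> \<le> u} - prob {\<omega> \<in> space M. U \<omega> \<le> u - e}"
      using \<open>0 < e\<close> by (intro finite_measure_Diff) auto
    also have "\<dots> = e"
      using True \<open>0 < e\<close> u uniform[of u] uniform[of "u - e"] by simp
    finally show ?thesis by simp
  next
    case False
    have "prob {\<omega> \<in> space M. U \<omega> = u} \<le> prob {\<omega> \<in> space M. U \<omega> \<le> u}"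
      by (intro finite_measure_mono) auto
    with False u uniform[of u] show ?thesis by simp
  qed
qed

lemma (in prob_space) prob_both_ge_eq:
  fixes U V :: "'a \<Rightarrow> real"
  assumes [measurable]: "U \<in> borel_measurable M" "V \<in> borel_measurable M"
    and "prob {\<omega> \<in> space M. U \<omega> = u} = 0" "prob {\<omega> \<in> space M. V \<omega> = u} = 0"
  shows "prob {\<omega> \<in> space M. U \<omega> \<ge> u \<and> V \<omega> \<ge> u} =
    1 - prob {\<omega> \<in> space M. U \<omega> \<le> u} - prob {\<omega> \<in> space M. V \<omega> \<le> u}
      + prob {\<omega> \<in> space M. U \<omega> \<le> u \<and> V \<omega> \<le> u}"
proof -
  let ?A = "{\<omega> \<in> space M. U \<omega> \<le> u}" and ?B = "{\<omega> \<in> space M. V \<omega> \<le> u}"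
  have "{\<omega> \<in> space M. U \<omega> = u} \<in> events" "{\<omega> \<in> space M. V \<omega> = u} \<in> events"
    by measurable
  then have "AE \<omega> in M. \<omega> \<notin> {\<omega> \<in> space M. U \<omega> = u}"
    "AE \<omega> in M. \<omega> \<notin> {\<omega> \<in> space M. V \<omega> = u}"
    using assms(3,4) by (simp_all only: prob_eq_0)
  with AE_space have "AE \<omega> in M.
      \<omega> \<in> {\<omega> \<in> space M. U \<omega> \<ge> u \<and> V \<omega> \<ge> u} \<longleftrightarrow> \<omega> \<in> space M - (?A \<union> ?B)"
    by eventually_elim auto
  then have "prob {\<omega> \<in> space M. U \<omega> \<ge> u \<and> V \<omega> \<ge> u} = prob (space M - (?A \<union> ?B))"
    by (rule measure_eq_AE) measurable
  also have "\<dots> = 1 - (prob ?A + prob ?B - prob (?A \<inter> ?B))"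
    by (simp add: prob_compl measure_Un3 fmeasurable_eq_sets)
  also have "?A \<inter> ?B = {\<omega> \<in> space M. U \<omega> \<le> u \<and> V \<omega> \<le> u}"
    by auto
  finally show ?thesis by simp
qed

lemma (in prob_space) copula_diagonal_tail_ratios:
  fixes U1 U2 :: "'a \<Rightarrow> real" and C :: "real \<Rightarrow> real \<Rightarrow> real"
  assumes [measurable]: "U1 \<in> borel_measurable M" "U2 \<in> borel_measurable M"
    and cdf: "\<And>x y. x \<in> {0..1} \<Longrightarrow> y \<in> {0..1} \<Longrightarrow>
      prob {\<omega> \<in> space M. U1 \<omega> \<le> x \<and> U2 \<omega> \<le> y} = C x y"
    and margins: "\<And>x. x \<in> {0..1} \<Longrightarrow> C x 1 = x" "\<And>y. y \<in> {0..1} \<Longrightarrow> C 1 y = y"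
    and u: "u \<in> {0<..<1}"
  shows "prob {\<omega> \<in> space M. U1 \<omega> \<le> u \<and> U2 \<omega> \<le> u} / prob {\<omega> \<in> space M. U2 \<omega> \<le> u}
      = C u u / u"
    and "prob {\<omega> \<in> space M. U1 \<omega> \<ge> u \<and> U2 \<omega> \<ge> u} / prob {\<omega> \<in> space M. U2 \<omega> \<ge> u}
      = (1 - 2 * u + C u u) / (1 - u)"
proof -
  have full: "prob {\<omega> \<in> space M. U1 \<omega> \<le> 1 \<and> U2 \<omega> \<le> 1} = 1"
    using cdf[of 1 1] margins(1)[of 1] by simp
  have swap: "{\<omega> \<in> space M. U2 \<omega> \<le> y \<and> U1 \<omega> \<le> x}
      = {\<omega> \<in> space M. U1 \<omega> \<le> x \<and> U2 \<omega> \<le> y}" for x y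
    by auto
  have F1: "prob {\<omega> \<in> space M. U1 \<omega> \<le> x} = x" if "x \<in> {0..1}" for x
    using prob_joint_le_eq_marginal[OF assms(2,1), of 1 1 x] full cdf[of x 1] margins(1) that
    by (simp only: swap) simp
  have F2: "prob {\<omega> \<in> space M. U2 \<omega> \<le> y} = y" if "y \<in> {0..1}" for y
    using prob_joint_le_eq_marginal[OF assms(1,2) full, of y] cdf[of 1 y] margins(2) that by simp
  have atoms: "prob {\<omega> \<in> space M. U1 \<omega> = u} = 0" "prob {\<omega> \<in> space M. U2 \<omega> = u} = 0"
    using u by (auto intro: prob_eq_0_of_uniform F1 F2)
  have "prob {\<omega> \<in> space M. U1 \<omega> \<ge> u \<and> U2 \<omega> \<ge> u} = 1 - 2 * u + C u u"
    using prob_both_ge_eq[OF assms(1,2) atoms] u cdf[of u u] F1[of u] F2[of u] by simp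
  moreover have "prob {\<omega> \<in> space M. U2 \<omega> \<ge> u} = 1 - u"
    using prob_both_ge_eq[OF assms(2,2) atoms(2,2)] u F2[of u] by simp
  ultimately show "prob {\<omega> \<in> space M. U1 \<omega> \<ge> u \<and> U2 \<omega> \<ge> u} / prob {\<omega> \<in> space M. U2 \<omega> \<ge> u}
      = (1 - 2 * u + C u u) / (1 - u)"
    by simp
  show "prob {\<omega> \<in> space M. U1 \<omega> \<le> u \<and> U2 \<omega> \<le> u} / prob {\<omega> \<in> space M. U2 \<omega> \<le> u}
      = C u u / u"
    using u cdf[of u u] F2[of u] by simp
qed

theorem theorem4:
  fixes M :: "'a measure" and U1 U2 :: "'a \<Rightarrow> real" and lam :: real
  assumes "prob_space M"
    and "U1 \<in> borel_measurable M" and "U2 \<in> borel_measurable M"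
    and "\<And>x y. x \<in> {0..1} \<Longrightarrow> y \<in> {0..1} \<Longrightarrow>
           measure M {\<omega> \<in> space M. U1 \<omega> \<le> x \<and> U2 \<omega> \<le> y} = pd_copula lam x y"
  shows "((\<lambda>u. measure M {\<omega> \<in> space M. U1 \<omega> \<le> u \<and> U2 \<omega> \<le> u}
                / measure M {\<omega> \<in> space M. U2 \<omega> \<le> u})
            \<longlongrightarrow> (if lam < -1 then 2 powr (1 / (lam + 1)) else 0)) (at_right 0) \<and>
         ((\<lambda>u. measure M {\<omega> \<in> space M. U1 \<omega> \<ge> u \<and> U2 \<omega> \<ge> u}
                / measure M {\<omega> \<in> space M. U2 \<omega> \<ge> u})
            \<longlongrightarrow> 2 - sqrt 2) (at_left 1)"
proof -
  interpret prob_space M by (rule assms(1))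
  note ratios = copula_diagonal_tail_ratios[OF assms(2-4) pd_copula_one]
  have "\<forall>\<^sub>F u in at_right 0. u \<in> {0<..<1::real}"
    by (rule eventually_at_right_real) simp
  then have lower: "\<forall>\<^sub>F u in at_right 0.
      prob {\<omega> \<in> space M. U1 \<omega> \<le> u \<and> U2 \<omega> \<le> u} / prob {\<omega> \<in> space M. U2 \<omega> \<le> u}
      = pd_copula lam u u / u"
    by eventually_elim (rule ratios(1))
  have "\<forall>\<^sub>F u in at_left 1. u \<in> {0<..<1::real}"
    by (rule eventually_at_left_real) simp
  then have upper: "\<forall>\<^sub>F u in at_left 1.
      prob {\<omega> \<in> space M. U1 \<omega> \<ge> u \<and> U2 \<omega> \<ge> u} / prob {\<omega> \<in> space M. U2 \<omega> \<ge> u}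
      = (1 - 2 * u + pd_copula lam u u) / (1 - u)"
    by eventually_elim (rule ratios(2))
  show ?thesis
    unfolding tendsto_cong[OF lower] tendsto_cong[OF upper]
    using pd_copula_lower_tail pd_copula_upper_tail by blast
qed

end
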